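(* Let $\alpha\geq 1$ be a real number. If a connected $(n,m)$-graph $G$ has maximum value of $Pl_\alpha$ among all connected $(n,m)$-graphs, then the maximum vertex degree in $G$ is $n-1$.
   Context: All graphs are finite, simple, undirected and connected; an $(n,m)$-graph has $n$ vertices and $m$ edges. The general Platt index is $Pl_\alpha(G)=\sum_{uv\in E(G)}(d_u+d_v-2)^\alpha$, where $d_u$ is the degree of vertex $u$. *)

theory Defs
  imports Complex_Main
begin

definition simple_graph :: "'a set \<Rightarrow> 'a set set \<Rightarrow> bool" where
  "simple_graph V E \<longleftrightarrow> finite V \<and> (\<forall>e\<in>E. e \<subseteq> V \<and> card e = 2)"

definition adj :: "'a set set \<Rightarrow> 'a \<Rightarrow> 'a \<Rightarrow> bool" where
  "adj E u v \<longleftrightarrow> {u, v} \<in> E"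

definition connected_graph :: "'a set \<Rightarrow> 'a set set \<Rightarrow> bool" where
  "connected_graph V E \<longleftrightarrow> simple_graph V E \<and> V \<noteq> {} \<and>
     (\<forall>u\<in>V. \<forall>v\<in>V. (adj E)\<^sup>*\<^sup>* u v)"

definition degree :: "'a set set \<Rightarrow> 'a \<Rightarrow> nat" where
  "degree E v = card {e\<in>E. v \<in> e}"

definition platt :: "real \<Rightarrow> 'a set set \<Rightarrow> real" where
  "platt \<alpha> E = (\<Sum>e\<in>E. (real (\<Sum>v\<in>e. degree E v) - 2) powr \<alpha>)"

definition max_degree :: "'a set \<Rightarrow> 'a set set \<Rightarrow> nat" where
  "max_degree V E = Max (degree E ` V)"

end

theory Submission
  imports Defs
begin

(* Let u be a vertex of maximum degree, and suppose it is not adjacent to all other vertices.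
   By connectivity some neighbour v of u has a neighbour outside the closed neighbourhood N[u].
   Replacing the k edges vy with y outside N[u] by uy keeps the graph connected with the same
   numbers of vertices and edges; d_u grows by k, d_v drops by k, all other degrees stay.
   The moved edges and the edges at u gain weight, and for a common neighbour z of u and v the
   pair uz, vz gains by convexity of t \<mapsto> t^\<alpha>, because d_v \<le> d_u.
   So Pl_\<alpha> strictly increases, contradicting maximality. *)

lemma powr_add_powr_le_spread:
  fixes a p q r s :: real
  assumes "a \<ge> 1" "0 < p" "p \<le> q" "q \<le> r" "r + q = p + s"
  shows "q powr a + r powr a \<le> p powr a + s powr a"
proof (cases "p = q")
  case True
  then show ?thesis using assms(5) by simp
next
  case False
  with assms(3) have pq: "p < q" by simp
  define f' where "f' z = a * z powr (a - 1)" for z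
  have D: "DERIV (\<lambda>z. z powr a) x :> f' x" if "0 < x" for x
    unfolding f'_def using has_real_derivative_powr[OF that] .
  have rs: "r < s" using assms pq by linarith
  obtain z1 where z1: "p < z1" "z1 < q" "q powr a - p powr a = (q - p) * f' z1"
    using MVT2[OF pq, of "\<lambda>z. z powr a" f'] D assms(2) by force
  obtain z2 where z2: "r < z2" "z2 < s" "s powr a - r powr a = (s - r) * f' z2"
    using MVT2[OF rs, of "\<lambda>z. z powr a" f'] D assms pq by force
  have "z1 powr (a - 1) \<le> z2 powr (a - 1)"
    using z1 z2 assms by (intro powr_mono2) auto
  then have "f' z1 \<le> f' z2" using assms by (simp add: f'_def)
  moreover have "q - p = s - r" "q - p > 0" using assms pq by auto
  ultimately have "(q - p) * f' z1 \<le> (s - r) * f' z2" by simp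
  then show ?thesis using z1 z2 by linarith
qed

lemma doubleton_in_image_iff:
  "{x, y} \<in> (\<lambda>t. {a, t}) ` Y \<longleftrightarrow> (x = a \<and> y \<in> Y) \<or> (y = a \<and> x \<in> Y)"
  by (auto simp: doubleton_eq_iff image_iff)

lemma inj_doubleton: "inj (\<lambda>z. {u, z})"
  by (auto simp: inj_on_def doubleton_eq_iff)

definition neighbors :: "'a set set \<Rightarrow> 'a \<Rightarrow> 'a set" where
  "neighbors E x = {y. {x, y} \<in> E}"

lemma neighbors_sym: "y \<in> neighbors E x \<longleftrightarrow> x \<in> neighbors E y"
  by (simp add: neighbors_def insert_commute)

lemma simple_graph_edgeE:
  assumes "simple_graph V E" "e \<in> E"
  obtains a b where "e = {a, b}" "a \<noteq> b" "a \<in> V" "b \<in> V"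
proof -
  have "card e = 2" "e \<subseteq> V" using assms by (auto simp: simple_graph_def)
  then show ?thesis using that by (auto simp: card_2_iff)
qed

lemma finite_edges: "simple_graph V E \<Longrightarrow> finite E"
  unfolding simple_graph_def by (meson Pow_iff finite_Pow_iff finite_subset subsetI)

lemma neighbors_subset:
  assumes "simple_graph V E"
  shows "neighbors E x \<subseteq> V - {x}"
proof
  fix y assume "y \<in> neighbors E x"
  then have "{x, y} \<in> E" by (simp add: neighbors_def)
  then have "card {x, y} = 2" "{x, y} \<subseteq> V" using assms by (auto simp: simple_graph_def)
  then show "y \<in> V - {x}" by (cases "x = y") auto
qed

lemma finite_neighbors: "simple_graph V E \<Longrightarrow> finite (neighbors E x)"
  using neighbors_subset by (metis finite_Diff finite_subset simple_graph_def)

lemma degree_eq_card_neighbors: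
  assumes "simple_graph V E"
  shows "degree E x = card (neighbors E x)"
proof -
  have "{e\<in>E. x \<in> e} = (\<lambda>y. {x, y}) ` neighbors E x"
  proof (intro set_eqI iffI)
    fix e assume "e \<in> {e\<in>E. x \<in> e}"
    then obtain a b where "e = {a, b}" "e \<in> E" "x \<in> e"
      using simple_graph_edgeE[OF assms] by blast
    then show "e \<in> (\<lambda>y. {x, y}) ` neighbors E x"
      by (auto simp: neighbors_def insert_commute)
  qed (auto simp: neighbors_def)
  then show ?thesis
    unfolding degree_def by (simp add: card_image inj_on_subset[OF inj_doubleton])
qed

lemma degree_le_card_minus_one:
  assumes "simple_graph V E" "x \<in> V"
  shows "degree E x \<le> card V - 1"
proof -
  have "finite V" using assms(1) by (simp add: simple_graph_def)
  then have "card (neighbors E x) \<le> card (V - {x})"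
    using neighbors_subset[OF assms(1)] by (intro card_mono) auto
  then show ?thesis using assms by (simp add: degree_eq_card_neighbors)
qed

lemma degree_ge_1_if_neighbor:
  assumes "simple_graph V E" "y \<in> neighbors E x"
  shows "degree E x \<ge> 1"
  using assms degree_eq_card_neighbors[OF assms(1)] finite_neighbors[OF assms(1)]
  by (metis One_nat_def Suc_leI card_gt_0_iff empty_iff)

lemma max_degree_vertexE:
  assumes "simple_graph V E" "V \<noteq> {}"
  obtains u where "u \<in> V" "degree E u = max_degree V E" "\<And>x. x \<in> V \<Longrightarrow> degree E x \<le> degree E u"
proof -
  have fin: "finite (degree E ` V)" using assms(1) by (simp add: simple_graph_def)
  have "max_degree V E \<in> degree E ` V"
    unfolding max_degree_def using fin assms(2) by simp
  then obtain u where u: "u \<in> V" "degree E u = max_degree V E" by auto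
  have "degree E x \<le> degree E u" if "x \<in> V" for x
    unfolding u(2) max_degree_def using fin that by simp
  with u that show ?thesis by blast
qed

lemma max_degree_le_card_minus_one:
  assumes "simple_graph V E" "V \<noteq> {}"
  shows "max_degree V E \<le> card V - 1"
proof -
  obtain u where "u \<in> V" "degree E u = max_degree V E"
    using max_degree_vertexE[OF assms] .
  then show ?thesis using degree_le_card_minus_one[OF assms(1)] by metis
qed

lemma rtranclp_adj_leaves_closed_neighborhood:
  assumes "(adj E)\<^sup>*\<^sup>* u b" "b \<notin> insert u (neighbors E u)"
  shows "\<exists>v\<in>neighbors E u. neighbors E v - insert u (neighbors E u) \<noteq> {}"
  using assms
proof (induction rule: rtranclp_induct)
  case base
  then show ?case by simp
next
  case (step b c)
  show ?case
  proof (cases "b \<in> insert u (neighbors E u)")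
    case True
    have "c \<in> neighbors E b" using step(2) by (simp add: adj_def neighbors_def)
    with True step(4) have "b \<in> neighbors E u" "c \<in> neighbors E b - insert u (neighbors E u)"
      by auto
    then show ?thesis by blast
  qed (use step in blast)
qed

lemma exists_neighbor_with_distant_neighbor:
  assumes "connected_graph V E" "u \<in> V" "degree E u < card V - 1"
  shows "\<exists>v\<in>neighbors E u. neighbors E v - insert u (neighbors E u) \<noteq> {}"
proof -
  have sg: "simple_graph V E" using assms(1) by (simp add: connected_graph_def)
  have fin: "finite (neighbors E u)" using finite_neighbors[OF sg] .
  have "card (insert u (neighbors E u)) \<le> Suc (degree E u)"
    using fin by (simp add: card_insert_if degree_eq_card_neighbors[OF sg])
  then have "card (insert u (neighbors E u)) < card V" using assms(3) by linarith
  then have "\<not> V \<subseteq> insert u (neighbors E u)" using fin by (meson card_mono finite_insert not_le)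
  then obtain b where "b \<in> V" "b \<notin> insert u (neighbors E u)" by blast
  moreover have "(adj E)\<^sup>*\<^sup>* u b"
    using assms(1,2) \<open>b \<in> V\<close> by (simp add: connected_graph_def)
  ultimately show ?thesis using rtranclp_adj_leaves_closed_neighborhood by metis
qed

definition edge_weight :: "real \<Rightarrow> 'a set set \<Rightarrow> 'a set \<Rightarrow> real" where
  "edge_weight \<alpha> E e = (real (\<Sum>x\<in>e. degree E x) - 2) powr \<alpha>"

lemma platt_eq_sum_edge_weight: "platt \<alpha> E = sum (edge_weight \<alpha> E) E"
  unfolding platt_def edge_weight_def ..

lemma edge_weight_doubleton:
  "a \<noteq> c \<Longrightarrow> edge_weight \<alpha> E {a, c} = (real (degree E a) + real (degree E c) - 2) powr \<alpha>"
  by (simp add: edge_weight_def)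

locale neighbor_shift =
  fixes V :: "'a set" and E :: "'a set set" and u v :: 'a
  assumes simple: "simple_graph V E" and adjacent: "v \<in> neighbors E u"
begin

definition moved :: "'a set" where
  "moved = neighbors E v - insert u (neighbors E u)"

definition kept :: "'a set set" where
  "kept = E - (\<lambda>y. {v, y}) ` moved"

definition shifted :: "'a set set" where
  "shifted = kept \<union> (\<lambda>y. {u, y}) ` moved"

lemma u_neq_v: "u \<noteq> v"
  and u_in_neighbors_v: "u \<in> neighbors E v"
  and moved_subset_neighbors: "moved \<subseteq> neighbors E v"
  and moved_disjoint: "moved \<inter> insert u (neighbors E u) = {}"
  and u_notin_moved: "u \<notin> moved"
  and v_notin_moved: "v \<notin> moved"
  and moved_subset: "moved \<subseteq> V"
  and finite_moved: "finite moved"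
  using adjacent neighbors_subset[OF simple, of u] neighbors_subset[OF simple, of v]
    finite_neighbors[OF simple, of v]
  by (auto simp: moved_def neighbors_sym intro: finite_subset)

lemma doubleton_in_shifted_iff:
  "{x, y} \<in> shifted \<longleftrightarrow>
     ({x, y} \<in> E \<and> \<not> ((x = v \<and> y \<in> moved) \<or> (y = v \<and> x \<in> moved)))
     \<or> (x = u \<and> y \<in> moved) \<or> (y = u \<and> x \<in> moved)"
  unfolding shifted_def kept_def Un_iff Diff_iff doubleton_in_image_iff by blast

lemma simple_graph_shifted: "simple_graph V shifted"
proof -
  have "e \<subseteq> V \<and> card e = 2" if "e \<in> shifted" for e
  proof -
    from that consider "e \<in> E" | y where "y \<in> moved" "e = {u, y}"
      unfolding shifted_def kept_def by blast
    then show ?thesis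
    proof cases
      case 1
      then show ?thesis using simple by (simp add: simple_graph_def)
    next
      case 2
      then show ?thesis
        using u_notin_moved moved_subset neighbors_subset[OF simple, of v] u_in_neighbors_v
        by (auto simp: card_2_iff)
    qed
  qed
  then show ?thesis using simple by (simp add: simple_graph_def)
qed

lemma moved_edges_subset: "(\<lambda>y. {v, y}) ` moved \<subseteq> E"
  using moved_subset_neighbors by (auto simp: neighbors_def)

lemma kept_disjoint_new_edges: "kept \<inter> (\<lambda>y. {u, y}) ` moved = {}"
  using moved_disjoint by (auto simp: kept_def neighbors_def)

lemma card_shifted: "card shifted = card E"
proof -
  have fin: "finite E" using finite_edges[OF simple] .
  have card_img: "card ((\<lambda>y. {w, y}) ` moved) = card moved" for w
    by (simp add: card_image inj_on_subset[OF inj_doubleton])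
  have "card shifted = card kept + card ((\<lambda>y. {u, y}) ` moved)"
    unfolding shifted_def using fin finite_moved kept_disjoint_new_edges
    by (intro card_Un_disjoint) (auto simp: kept_def)
  also have "\<dots> = card E"
    using card_Diff_subset[OF finite_subset[OF moved_edges_subset fin] moved_edges_subset]
      card_mono[OF fin moved_edges_subset] card_img
    by (simp add: kept_def)
  finally show ?thesis .
qed

lemma adj_imp_rtranclp_adj_shifted:
  assumes "adj E a b"
  shows "(adj shifted)\<^sup>*\<^sup>* a b"
proof (cases "{a, b} \<in> shifted")
  case True
  then show ?thesis by (intro r_into_rtranclp) (simp add: adj_def)
next
  case False
  have "{a, b} \<in> E" using assms by (simp add: adj_def)
  with False have "(a = v \<and> b \<in> moved) \<or> (b = v \<and> a \<in> moved)"
    unfolding doubleton_in_shifted_iff by blast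
  moreover have "adj shifted u v" "adj shifted v u"
    using adjacent u_notin_moved v_notin_moved
    unfolding adj_def doubleton_in_shifted_iff by (auto simp: neighbors_def insert_commute)
  moreover have "adj shifted u y" "adj shifted y u" if "y \<in> moved" for y
    using that unfolding adj_def doubleton_in_shifted_iff by auto
  ultimately show ?thesis by (metis converse_rtranclp_into_rtranclp r_into_rtranclp)
qed

lemma connected_graph_shifted:
  assumes "connected_graph V E"
  shows "connected_graph V shifted"
proof -
  have "(adj shifted)\<^sup>*\<^sup>* a b" if "(adj E)\<^sup>*\<^sup>* a b" for a b
    using that by induction (auto intro: rtranclp_trans adj_imp_rtranclp_adj_shifted)
  then show ?thesis
    using assms simple_graph_shifted by (simp add: connected_graph_def)
qed

lemma neighbors_shifted:
  "neighbors shifted x =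
     (if x = u then neighbors E u \<union> moved
      else if x = v then neighbors E v - moved
      else if x \<in> moved then insert u (neighbors E x - {v})
      else neighbors E x)"
  using u_neq_v u_notin_moved v_notin_moved
  unfolding set_eq_iff neighbors_def[of shifted] mem_Collect_eq doubleton_in_shifted_iff
  by (auto simp: neighbors_def)

lemma card_neighbors_shifted:
  "card (neighbors shifted x) =
     (if x = u then card (neighbors E u) + card moved
      else if x = v then card (neighbors E v) - card moved
      else card (neighbors E x))"
proof -
  have fin: "finite (neighbors E y)" for y using finite_neighbors[OF simple] .
  consider "x = u" | "x = v" | "x \<in> moved" | "x \<noteq> u" "x \<noteq> v" "x \<notin> moved" by blast
  then show ?thesis
  proof cases
    case 1
    have "neighbors E u \<inter> moved = {}" using moved_disjoint by blast
    then show ?thesis using 1 fin finite_moved by (simp add: neighbors_shifted card_Un_disjoint)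
  next
    case 2
    then show ?thesis
      using u_neq_v moved_subset_neighbors finite_moved by (simp add: neighbors_shifted card_Diff_subset)
  next
    case 3
    then have "v \<in> neighbors E x" "u \<notin> neighbors E x" "x \<noteq> u" "x \<noteq> v"
      using moved_subset_neighbors moved_disjoint u_notin_moved v_notin_moved
      by (auto simp: neighbors_sym)
    then have "card (insert u (neighbors E x - {v})) = card (neighbors E x)"
      using fin[of x] card_gt_0_iff[of "neighbors E x"] by auto
    with 3 show ?thesis using u_notin_moved v_notin_moved by (auto simp: neighbors_shifted)
  next
    case 4
    then show ?thesis by (simp add: neighbors_shifted)
  qed
qed

lemma degree_shifted:
  "real (degree shifted x) = real (degree E x)
     + (if x = u then real (card moved) else 0) - (if x = v then real (card moved) else 0)"
proof -
  have "card moved \<le> card (neighbors E v)"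
    using moved_subset_neighbors finite_neighbors[OF simple] by (intro card_mono) auto
  then show ?thesis
    using u_neq_v
    unfolding degree_eq_card_neighbors[OF simple] degree_eq_card_neighbors[OF simple_graph_shifted]
      card_neighbors_shifted
    by (auto simp: of_nat_diff)
qed

lemma edge_weight_le_shifted:
  assumes "0 \<le> \<alpha>" "{a, c} \<in> E" "v \<in> {a, c} \<Longrightarrow> u \<in> {a, c}"
  shows "edge_weight \<alpha> E {a, c} \<le> edge_weight \<alpha> shifted {a, c}"
proof -
  have ac: "a \<noteq> c" "c \<in> neighbors E a" "a \<in> neighbors E c"
    using assms(2) simple_graph_edgeE[OF simple assms(2)]
    by (auto simp: neighbors_def doubleton_eq_iff insert_commute)
  have "degree E a \<ge> 1" "degree E c \<ge> 1"
    using ac degree_ge_1_if_neighbor[OF simple] by auto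
  moreover have "real (degree E a) + real (degree E c)
      \<le> real (degree shifted a) + real (degree shifted c)"
    using assms(3) ac(1) u_neq_v unfolding degree_shifted by auto
  ultimately show ?thesis
    using assms(1) ac(1) by (simp add: edge_weight_doubleton powr_mono2)
qed

lemma edge_weight_moved_less:
  assumes "0 < \<alpha>" "degree E v \<le> degree E u" "y \<in> moved"
  shows "edge_weight \<alpha> E {v, y} < edge_weight \<alpha> shifted {u, y}"
proof -
  have y: "y \<noteq> u" "y \<noteq> v" "v \<in> neighbors E y"
    using assms(3) u_notin_moved v_notin_moved moved_subset_neighbors by (auto simp: neighbors_sym)
  have "card moved \<ge> 1" using assms(3) finite_moved by (auto simp: Suc_le_eq card_gt_0_iff)
  moreover have "degree E y \<ge> 1" "degree E v \<ge> 1"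
    using y(3) adjacent u_in_neighbors_v degree_ge_1_if_neighbor[OF simple] by auto
  ultimately show ?thesis
    using assms y u_neq_v
    by (simp add: edge_weight_doubleton degree_shifted powr_less_mono2)
qed

lemma edge_weight_common_neighbor_le:
  assumes "1 \<le> \<alpha>" "degree E v \<le> degree E u" "z \<in> neighbors E u" "z \<in> neighbors E v"
  shows "edge_weight \<alpha> E {u, z} + edge_weight \<alpha> E {v, z}
    \<le> edge_weight \<alpha> shifted {u, z} + edge_weight \<alpha> shifted {v, z}"
proof -
  let ?d = "\<lambda>x. real (degree E x)" and ?k = "real (card moved)"
  have z: "z \<noteq> u" "z \<noteq> v" "z \<notin> moved"
    using assms(3,4) neighbors_subset[OF simple] moved_disjoint by auto
  have "{u, v} \<subseteq> neighbors E z" using assms(3,4) by (simp add: neighbors_sym)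
  from card_mono[OF finite_neighbors[OF simple] this]
  have dz: "?d z \<ge> 2" using u_neq_v by (simp add: degree_eq_card_neighbors[OF simple])
  have "moved \<subset> neighbors E v" using moved_subset_neighbors u_in_neighbors_v u_notin_moved by blast
  from psubset_card_mono[OF finite_neighbors[OF simple] this]
  have "card moved < degree E v" by (simp add: degree_eq_card_neighbors[OF simple])
  then have "(?d v + ?d z - 2) powr \<alpha> + (?d u + ?d z - 2) powr \<alpha>
      \<le> (?d v - ?k + ?d z - 2) powr \<alpha> + (?d u + ?k + ?d z - 2) powr \<alpha>"
    using assms(1,2) dz by (intro powr_add_powr_le_spread) auto
  then show ?thesis
    using z u_neq_v by (simp add: edge_weight_doubleton degree_shifted insert_commute add_ac)
qed

definition common_edges :: "'a set set" where
  "common_edges = (\<lambda>z. {u, z}) ` (neighbors E u \<inter> neighbors E v)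
     \<union> (\<lambda>z. {v, z}) ` (neighbors E u \<inter> neighbors E v)"

lemma sum_common_edges:
  "sum f common_edges = (\<Sum>z\<in>neighbors E u \<inter> neighbors E v. f {u, z} + f {v, z})"
proof -
  let ?C = "neighbors E u \<inter> neighbors E v"
  have "u \<notin> ?C" using neighbors_subset[OF simple, of u] by auto
  then have "(\<lambda>z. {u, z}) ` ?C \<inter> (\<lambda>z. {v, z}) ` ?C = {}"
    using u_neq_v by (auto simp: doubleton_eq_iff)
  then have "sum f common_edges = sum f ((\<lambda>z. {u, z}) ` ?C) + sum f ((\<lambda>z. {v, z}) ` ?C)"
    unfolding common_edges_def using finite_neighbors[OF simple] by (intro sum.union_disjoint) auto
  also have "\<dots> = (\<Sum>z\<in>?C. f {u, z}) + (\<Sum>z\<in>?C. f {v, z})"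
    by (simp add: sum.reindex inj_on_subset[OF inj_doubleton])
  finally show ?thesis by (simp add: sum.distrib)
qed

lemma common_edges_subset_kept: "common_edges \<subseteq> kept"
proof
  fix e assume "e \<in> common_edges"
  then obtain w z where wz: "w \<in> {u, v}" "z \<in> neighbors E u \<inter> neighbors E v" "e = {w, z}"
    by (auto simp: common_edges_def)
  then have "e \<in> E" by (auto simp: neighbors_def)
  moreover have "z \<notin> moved" using wz(2) moved_disjoint by auto
  moreover have "e \<noteq> {v, y}" if "y \<in> moved" for y
    using that wz \<open>z \<notin> moved\<close> u_notin_moved v_notin_moved by (auto simp: doubleton_eq_iff)
  ultimately show "e \<in> kept" by (auto simp: kept_def)
qed

lemma kept_edge_at_v_contains_u:
  assumes "e \<in> kept - common_edges" "v \<in> e"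
  shows "u \<in> e"
proof -
  have "e \<in> E" using assms(1) by (simp add: kept_def)
  then obtain a c where "e = {a, c}" using simple_graph_edgeE[OF simple] by metis
  then obtain x where x: "e = {v, x}" using assms(2) by (auto simp: insert_commute)
  have "x \<in> neighbors E v" "x \<notin> moved" "x \<notin> neighbors E u \<inter> neighbors E v"
    using assms(1) x by (auto simp: kept_def common_edges_def neighbors_def)
  then show ?thesis using x by (auto simp: moved_def)
qed

lemma sum_edge_weight_kept_le:
  assumes "1 \<le> \<alpha>" "degree E v \<le> degree E u"
  shows "sum (edge_weight \<alpha> E) kept \<le> sum (edge_weight \<alpha> shifted) kept"
proof -
  have fin: "finite kept" using finite_edges[OF simple] by (simp add: kept_def)
  have rest: "edge_weight \<alpha> E e \<le> edge_weight \<alpha> shifted e" if e: "e \<in> kept - common_edges" for e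
  proof -
    have "e \<in> E" using e by (simp add: kept_def)
    then obtain a c where ac: "e = {a, c}" using simple_graph_edgeE[OF simple] by metis
    show ?thesis
      using \<open>e \<in> E\<close> assms(1) kept_edge_at_v_contains_u[OF e] unfolding ac
      by (intro edge_weight_le_shifted) auto
  qed
  have common: "edge_weight \<alpha> E {u, z} + edge_weight \<alpha> E {v, z}
      \<le> edge_weight \<alpha> shifted {u, z} + edge_weight \<alpha> shifted {v, z}"
    if "z \<in> neighbors E u \<inter> neighbors E v" for z
    using that assms by (simp add: edge_weight_common_neighbor_le)
  have "sum (edge_weight \<alpha> E) kept
      = sum (edge_weight \<alpha> E) (kept - common_edges) + sum (edge_weight \<alpha> E) common_edges"
    using common_edges_subset_kept fin by (simp add: sum.subset_diff)
  also have "\<dots> \<le> sum (edge_weight \<alpha> shifted) (kept - common_edges)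
      + sum (edge_weight \<alpha> shifted) common_edges"
    unfolding sum_common_edges by (intro add_mono sum_mono rest common)
  also have "\<dots> = sum (edge_weight \<alpha> shifted) kept"
    using common_edges_subset_kept fin by (simp add: sum.subset_diff)
  finally show ?thesis .
qed

lemma platt_less_shifted:
  assumes "1 \<le> \<alpha>" "degree E v \<le> degree E u" "moved \<noteq> {}"
  shows "platt \<alpha> E < platt \<alpha> shifted"
proof -
  have fin: "finite E" using finite_edges[OF simple] .
  have "platt \<alpha> E = sum (edge_weight \<alpha> E) kept + (\<Sum>y\<in>moved. edge_weight \<alpha> E {v, y})"
    unfolding platt_eq_sum_edge_weight kept_def using sum.subset_diff[OF moved_edges_subset fin]
    by (simp add: sum.reindex inj_on_subset[OF inj_doubleton])
  moreover have "platt \<alpha> shifted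
      = sum (edge_weight \<alpha> shifted) kept + (\<Sum>y\<in>moved. edge_weight \<alpha> shifted {u, y})"
    unfolding platt_eq_sum_edge_weight shifted_def
    using fin finite_moved kept_disjoint_new_edges
    by (simp add: kept_def sum.union_disjoint sum.reindex inj_on_subset[OF inj_doubleton])
  moreover have "(\<Sum>y\<in>moved. edge_weight \<alpha> E {v, y}) < (\<Sum>y\<in>moved. edge_weight \<alpha> shifted {u, y})"
    using assms by (intro sum_strict_mono finite_moved edge_weight_moved_less) auto
  ultimately show ?thesis using sum_edge_weight_kept_le[OF assms(1,2)] by linarith
qed

end

theorem corollary4:
  fixes \<alpha> :: real and V :: "'a set" and E :: "'a set set"
  assumes "\<alpha> \<ge> 1"
    and "connected_graph V E"
    and "\<And>V' E' :: 'a set set. connected_graph V' E' \<Longrightarrow> card V' = card V \<Longrightarrow>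
           card E' = card E \<Longrightarrow> platt \<alpha> E' \<le> platt \<alpha> E"
  shows "max_degree V E = card V - 1"
proof (rule ccontr)
  have simple: "simple_graph V E" and "V \<noteq> {}"
    using assms(2) by (auto simp: connected_graph_def)
  then obtain u where u: "u \<in> V" "degree E u = max_degree V E"
    and max: "\<And>x. x \<in> V \<Longrightarrow> degree E x \<le> degree E u"
    by (rule max_degree_vertexE) blast
  assume "max_degree V E \<noteq> card V - 1"
  with max_degree_le_card_minus_one[OF simple \<open>V \<noteq> {}\<close>] u(2)
  have "degree E u < card V - 1" by simp
  then obtain v where v: "v \<in> neighbors E u" "neighbors E v - insert u (neighbors E u) \<noteq> {}"
    using exists_neighbor_with_distant_neighbor[OF assms(2) u(1)] by blast
  interpret neighbor_shift V E u v
    using simple v(1) by unfold_locales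
  have "platt \<alpha> shifted \<le> platt \<alpha> E"
    using assms(3)[OF connected_graph_shifted[OF assms(2)] refl card_shifted] .
  moreover have "degree E v \<le> degree E u"
    using max v(1) neighbors_subset[OF simple] by blast
  then have "platt \<alpha> E < platt \<alpha> shifted"
    using assms(1) v(2) by (intro platt_less_shifted) (simp_all add: moved_def)
  ultimately show False by simp
qed

end
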